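(* Let $p>1$, $N\ge2m-1$, and let $\mathcal I\subseteq\{1,\dots,N\}$ be a nonempty index set. Then there exists a set $S_A\subseteq\mathbb R^{m\times N}$ whose complement has Lebesgue measure zero such that for each fixed $A\in S_A$, the unique optimal solution $x^*$ of $\min_{x\in\mathbb R^N}\|x\|_p$ subject to $Ax=y$ satisfies $|\mathrm{supp}(x^* )|=N$ for almost all $y\in R(A_{\bullet\mathcal I})$ (with respect to Lebesgue measure on the subspace $R(A_{\bullet\mathcal I})$).
   Context: $\|x\|_p:=(\sum_i|x_i|^p)^{1/p}$; $\mathrm{supp}(x)=\{i:x_i\ne0\}$. For an index set $\mathcal I$, $A_{\bullet\mathcal I}$ is the submatrix of $A$ formed by the columns indexed by $\mathcal I$, and $R(\cdot)$ denotes the range. *)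

theory Defs
  imports "HOL-Analysis.Analysis"
begin

definition pnorm :: "real \<Rightarrow> real ^ 'n \<Rightarrow> real" where
  "pnorm p x = (\<Sum>i\<in>UNIV. \<bar>x $ i\<bar> powr p) powr (1 / p)"

definition supp :: "real ^ 'n \<Rightarrow> 'n set" where
  "supp x = {i. x $ i \<noteq> 0}"

definition lp_optimal :: "real \<Rightarrow> real ^ 'n ^ 'm \<Rightarrow> real ^ 'm \<Rightarrow> real ^ 'n \<Rightarrow> bool" where
  "lp_optimal p A y x \<longleftrightarrow> A *v x = y \<and> (\<forall>z. A *v z = y \<longrightarrow> pnorm p x \<le> pnorm p z)"

definition col_range :: "real ^ 'n ^ 'm \<Rightarrow> 'n set \<Rightarrow> (real ^ 'm) set" where
  "col_range A I = span {column j A | j. j \<in> I}"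

text \<open>B is a null set for the (dim V)-dimensional Lebesgue measure on the linear subspace V.
  By Fubini over the orthogonal decomposition R^m = V (+) V^perp, this holds iff the
  cylinder B + V^perp is a Lebesgue null set of the ambient space.\<close>
definition subspace_null :: "'a::euclidean_space set \<Rightarrow> 'a set \<Rightarrow> bool" where
  "subspace_null V B \<longleftrightarrow> B \<subseteq> V \<and>
     {b + w | b w. b \<in> B \<and> w \<in> orthogonal_comp V} \<in> null_sets lebesgue"

definition ae_subspace :: "'a::euclidean_space set \<Rightarrow> ('a \<Rightarrow> bool) \<Rightarrow> bool" where
  "ae_subspace V P \<longleftrightarrow> subspace_null V {y \<in> V. \<not> P y}"

end

theory Submission
  imports Defs "HOL-Real_Asymp.Real_Asymp"
begin

text \<open>
  For \<open>p > 1\<close> the minimiser of \<open>\<parallel>x\<parallel>\<^sub>p\<close> subject to \<open>A x = y\<close> is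
  \<open>x\<^sub>j = signed_powr (1/(p-1)) (a\<^sub>j \<bullet> w)\<close>, where \<open>a\<^sub>j\<close> are the columns of \<open>A\<close> and the dual
  vector \<open>w\<close> solves \<open>\<Sum>\<^sub>j signed_powr (1/(p-1)) (a\<^sub>j \<bullet> w) a\<^sub>j = y\<close>: the tangent inequality of
  \<open>|.|\<^sup>p\<close> makes this \<open>x\<close> the unique optimum. For \<open>A\<close> of full row rank the left-hand side is a
  strictly monotone gradient of a coercive potential, hence a bijection, so the optimum has full
  support unless some column is orthogonal to \<open>w\<close>.

  Write \<open>y = A u\<close> with \<open>u\<close> supported on \<open>I\<close>. The exceptional pairs \<open>(A, u)\<close> are covered by
  finitely many Borel sets, each meeting every line in a suitable direction only finitely often,
  hence null. If \<open>a\<^sub>j \<bullet> w = 0\<close> with \<open>j \<in> I\<close>, the direction moves \<open>u\<^sub>j\<close>; if \<open>j \<notin> I\<close>, it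
  moves the entry \<open>(k, j)\<close> of \<open>A\<close>, where \<open>w\<^sub>k \<noteq> 0\<close>. By Fubini, for almost every \<open>A\<close> the
  exceptional \<open>u\<close> form a null set, and this transfers to the subspace \<open>R(A\<^sub>I)\<close>, the image of
  \<open>u \<mapsto> A u\<close>.
\<close>

section \<open>Signed powers\<close>

definition signed_powr :: "real \<Rightarrow> real \<Rightarrow> real" where
  "signed_powr e s = sgn s * \<bar>s\<bar> powr e"

lemma signed_powr_0 [simp]: "signed_powr e 0 = 0"
  by (simp add: signed_powr_def)

lemma signed_powr_eq_0_iff [simp]: "signed_powr e s = 0 \<longleftrightarrow> s = 0"
  by (simp add: signed_powr_def sgn_if)

lemma abs_signed_powr: "\<bar>signed_powr e s\<bar> = \<bar>s\<bar> powr e"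
  by (simp add: signed_powr_def abs_mult abs_sgn_eq)

lemma signed_powr_mult_self: "signed_powr e s * s = \<bar>s\<bar> powr (e + 1)"
  by (cases "s = 0") (auto simp: signed_powr_def powr_add sgn_if)

lemma signed_powr_signed_powr:
  assumes "e > 0"
  shows "signed_powr e (signed_powr (1 / e) s) = s"
proof -
  have "sgn (signed_powr (1 / e) s) = sgn s"
    by (auto simp: signed_powr_def sgn_mult sgn_if)
  moreover have "\<bar>signed_powr (1 / e) s\<bar> powr e = \<bar>s\<bar>"
    using assms by (simp add: abs_signed_powr powr_powr)
  ultimately show ?thesis
    by (simp add: signed_powr_def[of e] sgn_mult_abs)
qed

lemma strict_mono_signed_powr:
  assumes "e > 0"
  shows "strict_mono (signed_powr e)"
proof
  fix s t :: real
  assume "s < t"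
  consider "0 \<le> s" | "s < 0" "0 \<le> t" | "t < 0"
    by linarith
  then show "signed_powr e s < signed_powr e t"
  proof cases
    case 1
    then show ?thesis
      using assms \<open>s < t\<close> powr_less_mono2[of e s t] by (simp add: signed_powr_def sgn_if)
  next
    case 2
    then have "signed_powr e s = - ((-s) powr e)" "signed_powr e t = t powr e" "0 < (-s) powr e"
      by (auto simp: signed_powr_def sgn_if)
    then show ?thesis
      using powr_ge_zero[of t e] by linarith
  next
    case 3
    then show ?thesis
      using assms \<open>s < t\<close> powr_less_mono2[of e "-t" "-s"] by (simp add: signed_powr_def sgn_if)
  qed
qed

lemma signed_powr_diff_mult_nonneg:
  "e > 0 \<Longrightarrow> 0 \<le> (signed_powr e s - signed_powr e t) * (s - t)"
  using strict_mono_less[OF strict_mono_signed_powr, of e s t] strict_mono_less[OF strict_mono_signed_powr, of e t s]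
  by (cases s t rule: linorder_cases) (auto simp: zero_le_mult_iff)

lemma signed_powr_diff_mult_eq_0_iff:
  "e > 0 \<Longrightarrow> (signed_powr e s - signed_powr e t) * (s - t) = 0 \<longleftrightarrow> s = t"
  using strict_mono_signed_powr[of e] by (auto simp: strict_mono_eq)

lemma continuous_on_signed_powr [continuous_intros]:
  assumes "e > 0" and "continuous_on S f"
  shows "continuous_on S (\<lambda>x. signed_powr e (f x))"
proof -
  have "continuous_on ({0..} \<union> {..0}) (\<lambda>s. if s \<in> {0..} then s powr e else - ((-s) powr e))"
    using assms(1) by (intro continuous_on_cases continuous_intros continuous_on_powr') auto
  also have "(\<lambda>s. if s \<in> {0..} then s powr e else - ((-s) powr e)) = signed_powr e"
    by (auto simp: signed_powr_def sgn_if fun_eq_iff)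
  also have "{0..} \<union> {..0} = (UNIV :: real set)"
    by auto
  finally show ?thesis
    using continuous_on_compose2[OF _ assms(2)] by blast
qed

lemma has_real_derivative_abs_powr:
  assumes "q > 1"
  shows "((\<lambda>s. \<bar>s\<bar> powr q) has_real_derivative q * signed_powr (q - 1) x) (at x)"
proof (cases "x = 0")
  case True
  have "((\<lambda>s. \<bar>s\<bar> powr q / s) \<longlongrightarrow> 0) (at 0)"
    using assms by real_asymp
  then show ?thesis
    using True by (simp add: has_field_derivative_iff)
next
  case False
  \<comment> \<open>Near \<open>x\<close> the absolute value is \<open>s \<mapsto> sgn x * s\<close>.\<close>
  have "\<forall>\<^sub>F s in nhds x. sgn x * s > 0"
    using False by (intro order_tendstoD(1)[OF tendsto_mult_left[OF filterlim_ident]])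
      (simp add: sgn_if)
  then have "\<forall>\<^sub>F s in nhds x. (sgn x * s) powr q = \<bar>s\<bar> powr q"
    by eventually_elim (auto simp: sgn_if split: if_splits)
  moreover have "((\<lambda>s. (sgn x * s) powr q) has_real_derivative q * signed_powr (q - 1) x) (at x)"
    using False
    by (auto intro!: derivative_eq_intros simp: signed_powr_def sgn_if mult_ac)
  ultimately show ?thesis
    by (rule DERIV_cong_ev[OF refl _ refl, THEN iffD1])
qed

lemma abs_powr_tangent_le:
  assumes p: "p > 1"
  shows "\<bar>a\<bar> powr p + p * signed_powr (p - 1) a * (b - a) \<le> \<bar>b\<bar> powr p"
proof -
  define q where "q = p / (p - 1)"
  have q: "q > 1" "1 / q + 1 / p = 1"
    using p by (auto simp: q_def field_simps)
  have "signed_powr (p - 1) a * b \<le> \<bar>a\<bar> powr (p - 1) * \<bar>b\<bar>"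
    by (metis abs_ge_self abs_mult abs_signed_powr)
  also have "\<dots> \<le> (\<bar>a\<bar> powr (p - 1)) powr q / q + \<bar>b\<bar> powr p / p"
    using Youngs_inequality[of q p] q p by auto
  also have "(\<bar>a\<bar> powr (p - 1)) powr q = \<bar>a\<bar> powr p"
    using p by (simp add: powr_powr q_def)
  finally have "p * (signed_powr (p - 1) a * b) \<le> (p - 1) * \<bar>a\<bar> powr p + \<bar>b\<bar> powr p"
    using p by (simp add: q_def field_simps)
  moreover have "signed_powr (p - 1) a * a = \<bar>a\<bar> powr p"
    using signed_powr_mult_self[of "p - 1" a] by simp
  ultimately show ?thesis
    by (simp add: algebra_simps)
qed

lemma abs_powr_tangent_eq_imp_eq:
  assumes p: "p > 1" and eq: "\<bar>a\<bar> powr p + p * signed_powr (p - 1) a * (b - a) = \<bar>b\<bar> powr p"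
  shows "a = b"
proof (rule ccontr)
  assume "a \<noteq> b"
  define g where "g t = p * signed_powr (p - 1) t" for t
  define c where "c = (a + b) / 2"
  have tangent: "\<bar>s\<bar> powr p + g s * (t - s) \<le> \<bar>t\<bar> powr p" for s t
    using abs_powr_tangent_le[OF p] by (simp add: g_def mult.assoc)
  have eq': "\<bar>a\<bar> powr p + g a * (b - a) = \<bar>b\<bar> powr p"
    using eq by (simp add: g_def mult.assoc)
  \<comment> \<open>The tangent at \<open>a\<close> touches at \<open>b\<close>, so it also touches at the midpoint \<open>c\<close>,
     and then the tangent at \<open>c\<close> must have the same slope.\<close>
  have "g a * (c - a) = g a * (b - a) / 2" "g a * (a - c) = - (g a * (b - a) / 2)"
    "g c * (b - c) = - (g c * (a - c))"
    by (simp_all add: c_def field_simps)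
  then have "g c * (a - c) = g a * (a - c)"
    using tangent[of a c] tangent[of c a] tangent[of c b] eq' by argo
  then have "(g c - g a) * (a - c) = 0"
    by (simp add: algebra_simps)
  moreover have "a \<noteq> c"
    using \<open>a \<noteq> b\<close> by (simp add: c_def)
  ultimately have "signed_powr (p - 1) c = signed_powr (p - 1) a"
    using p by (simp add: g_def)
  then show False
    using \<open>a \<noteq> c\<close> strict_mono_signed_powr[of "p - 1"] p by (simp add: strict_mono_eq)
qed

section \<open>The optimal solution and the dual map\<close>

definition dual_map :: "real \<Rightarrow> real^'n^'m \<Rightarrow> real^'m \<Rightarrow> real^'m" where
  "dual_map r A w = A *v (\<chi> j. signed_powr r (column j A \<bullet> w))"

definition full_row_rank :: "real^'n^'m \<Rightarrow> bool" where
  "full_row_rank A \<longleftrightarrow> (\<forall>w. (\<forall>j. column j A \<bullet> w = 0) \<longrightarrow> w = 0)"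

definition unique_full_support_solution :: "real \<Rightarrow> real^'n^'m \<Rightarrow> real^'m \<Rightarrow> bool" where
  "unique_full_support_solution p A y \<longleftrightarrow>
     (\<exists>x. lp_optimal p A y x \<and> (\<forall>x'. lp_optimal p A y x' \<longrightarrow> x' = x) \<and> card (supp x) = CARD('n))"

lemma matrix_vector_mult_inner: "(A *v x) \<bullet> w = (\<Sum>j\<in>UNIV. x $ j * (column j A \<bullet> w))"
  by (simp add: matrix_mult_sum inner_sum_left scalar_mult_eq_scaleR)

lemma pnorm_le_pnorm_iff:
  assumes "p > 0"
  shows "pnorm p x \<le> pnorm p z \<longleftrightarrow>
    (\<Sum>i\<in>UNIV. \<bar>x $ i\<bar> powr p) \<le> (\<Sum>i\<in>UNIV. \<bar>z $ i\<bar> powr p)"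
proof -
  have "a powr (1 / p) \<le> b powr (1 / p) \<longleftrightarrow> a \<le> b" if "a \<ge> 0" "b \<ge> 0" for a b :: real
    using that assms powr_less_mono2[of "1 / p" b a] powr_mono2[of "1 / p" a b] by force
  then show ?thesis
    unfolding pnorm_def by (simp add: sum_nonneg)
qed

text \<open>Optimality follows from the tangent inequality of \<open>|.|\<^sup>p\<close> at \<open>x\<close>: the first-order term
  \<open>p \<Sum>\<^sub>j signed_powr (p - 1) (x\<^sub>j) (z\<^sub>j - x\<^sub>j) = p (A (z - x)) \<bullet> w\<close> vanishes for every
  feasible \<open>z\<close>.\<close>

lemma lp_optimal_signed_powr_columns:
  fixes A :: "real^'n^'m" and w :: "real^'m"
  assumes p: "p > 1"
  defines "x \<equiv> \<chi> j. signed_powr (1 / (p - 1)) (column j A \<bullet> w)"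
  shows "lp_optimal p A (A *v x) x" and "lp_optimal p A (A *v x) z \<Longrightarrow> z = x"
proof -
  define gap where
    "gap z j = \<bar>z $ j\<bar> powr p - \<bar>x $ j\<bar> powr p - p * signed_powr (p - 1) (x $ j) * (z $ j - x $ j)"
    for z j
  have gap_nonneg: "gap z j \<ge> 0" for z j
    using abs_powr_tangent_le[OF p, of "x $ j" "z $ j"] by (simp add: gap_def)
  have slope: "signed_powr (p - 1) (x $ j) = column j A \<bullet> w" for j
    using signed_powr_signed_powr[of "p - 1"] p by (simp add: x_def)
  have sum_eq: "(\<Sum>j\<in>UNIV. \<bar>z $ j\<bar> powr p) = (\<Sum>j\<in>UNIV. \<bar>x $ j\<bar> powr p) + sum (gap z) UNIV"
    if "A *v z = A *v x" for z
  proof -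
    have "(\<Sum>j\<in>UNIV. signed_powr (p - 1) (x $ j) * (z $ j - x $ j)) = (A *v (z - x)) \<bullet> w"
      by (simp add: matrix_vector_mult_inner slope mult.commute)
    also have "\<dots> = 0"
      using that by (simp add: matrix_vector_mult_diff_distrib)
    finally have "(\<Sum>j\<in>UNIV. p * signed_powr (p - 1) (x $ j) * (z $ j - x $ j)) = 0"
      by (simp add: mult.assoc flip: sum_distrib_left)
    then show ?thesis
      by (simp add: gap_def sum_subtractf)
  qed
  show opt: "lp_optimal p A (A *v x) x"
    unfolding lp_optimal_def
  proof (intro conjI allI impI)
    fix z
    assume "A *v z = A *v x"
    then show "pnorm p x \<le> pnorm p z"
      using sum_eq[of z] gap_nonneg pnorm_le_pnorm_iff[of p x z] p by (simp add: sum_nonneg)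
  qed simp
  assume "lp_optimal p A (A *v x) z"
  then have "A *v z = A *v x" "pnorm p z \<le> pnorm p x"
    using opt by (auto simp: lp_optimal_def)
  then have "sum (gap z) UNIV = 0"
    using sum_eq[of z] pnorm_le_pnorm_iff[of p z x] p sum_nonneg[of UNIV "gap z"] gap_nonneg
    by simp
  then have gap_0: "gap z j = 0" for j
    using gap_nonneg sum_nonneg_eq_0_iff[of UNIV "gap z"] by simp
  have "x $ j = z $ j" for j
    by (rule abs_powr_tangent_eq_imp_eq[OF p]) (use gap_0[of j] in \<open>simp add: gap_def\<close>)
  then show "z = x"
    by (simp add: vec_eq_iff)
qed

lemma unique_full_support_solution_dual_map:
  assumes "p > 1" and "\<And>j. column j A \<bullet> w \<noteq> 0"
  shows "unique_full_support_solution p A (dual_map (1 / (p - 1)) A w)"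
proof -
  define x where "x = (\<chi> j. signed_powr (1 / (p - 1)) (column j A \<bullet> w))"
  have "supp x = UNIV"
    using assms by (auto simp: supp_def x_def)
  then show ?thesis
    using lp_optimal_signed_powr_columns[OF assms(1), of A w]
    unfolding unique_full_support_solution_def dual_map_def x_def[symmetric] by auto
qed

lemma dual_map_monotone_eq_0_imp_eq:
  assumes r: "r > 0" and A: "full_row_rank A"
    and eq: "(dual_map r A w - dual_map r A v) \<bullet> (w - v) = 0"
  shows "w = v"
proof -
  define d where
    "d j = (signed_powr r (column j A \<bullet> w) - signed_powr r (column j A \<bullet> v)) *
             (column j A \<bullet> w - column j A \<bullet> v)" for j
  have "(dual_map r A w - dual_map r A v) \<bullet> (w - v) = sum d UNIV"
    unfolding dual_map_def d_def
    by (simp add: matrix_vector_mult_inner inner_diff_right right_diff_distrib sum_subtractf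
        flip: matrix_vector_mult_diff_distrib)
  then have "d j = 0" for j
    using eq sum_nonneg_eq_0_iff[of UNIV d] signed_powr_diff_mult_nonneg[OF r]
    by (simp add: d_def)
  then have "column j A \<bullet> (w - v) = 0" for j
    using signed_powr_diff_mult_eq_0_iff[OF r] by (simp add: d_def inner_diff_right)
  then show "w = v"
    using A[unfolded full_row_rank_def, rule_format, of "w - v"] by simp
qed

lemma inj_dual_map: "r > 0 \<Longrightarrow> full_row_rank A \<Longrightarrow> inj (dual_map r A)"
  by (rule injI) (simp add: dual_map_monotone_eq_0_imp_eq)

lemma full_row_rank_bounded_below:
  fixes A :: "real^'n^'m"
  assumes "full_row_rank A"
  obtains c where "c > 0" "\<And>w. \<exists>j. c * norm w \<le> \<bar>column j A \<bullet> w\<bar>"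
proof -
  have col: "(w v* A) $ j = column j A \<bullet> w" for w j
    by (simp add: vector_matrix_mult_def column_def inner_vec_def mult.commute)
  have "inj ((*v) (transpose A))"
  proof (rule injI)
    fix u v
    assume uv: "transpose A *v u = transpose A *v v"
    have "column j A \<bullet> (u - v) = 0" for j
      using arg_cong[OF uv, of "\<lambda>z. z $ j"] by (simp add: col inner_diff_right)
    then show "u = v"
      using assms[unfolded full_row_rank_def, rule_format, of "u - v"] by simp
  qed
  then obtain B where B: "B > 0" "\<And>w. B * norm w \<le> norm (transpose A *v w)"
    using linear_inj_bounded_below_pos[OF matrix_vector_mul_linear] by blast
  show ?thesis
  proof
    show "B / CARD('n) > 0"
      using B by simp
    fix w
    define M where "M = Max (range (\<lambda>i. \<bar>column i A \<bullet> w\<bar>))"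
    have "M \<in> range (\<lambda>i. \<bar>column i A \<bullet> w\<bar>)"
      unfolding M_def by (intro Max_in) auto
    then obtain j where j: "M = \<bar>column j A \<bullet> w\<bar>"
      by blast
    have "B * norm w \<le> (\<Sum>i\<in>UNIV. \<bar>column i A \<bullet> w\<bar>)"
      using B(2)[of w] norm_le_l1_cart[of "transpose A *v w"] by (simp add: col)
    also have "\<dots> \<le> CARD('n) * M"
      using sum_bounded_above[of UNIV "\<lambda>i. \<bar>column i A \<bullet> w\<bar>" M] unfolding M_def
      by simp
    finally have "B / CARD('n) * norm w \<le> M"
      by (simp add: field_simps)
    then show "\<exists>j. B / CARD('n) * norm w \<le> \<bar>column j A \<bullet> w\<bar>"
      using j by blast
  qed
qed

definition dual_potential :: "real \<Rightarrow> real^'n^'m \<Rightarrow> real^'m \<Rightarrow> real^'m \<Rightarrow> real" where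
  "dual_potential r A y w = (\<Sum>j\<in>UNIV. \<bar>column j A \<bullet> w\<bar> powr (r + 1) / (r + 1)) - y \<bullet> w"

lemma has_derivative_dual_potential:
  assumes "r > 0"
  shows "(dual_potential r A y has_derivative (\<lambda>h. (dual_map r A w - y) \<bullet> h)) (at w)"
proof -
  have "((\<lambda>s. \<bar>s\<bar> powr (r + 1) / (r + 1)) has_real_derivative signed_powr r s) (at s)" for s
    using DERIV_cdivide[OF has_real_derivative_abs_powr[of "r + 1" s], of "r + 1"] assms by simp
  then have "((\<lambda>w. \<bar>column j A \<bullet> w\<bar> powr (r + 1) / (r + 1)) has_derivative
      (\<lambda>h. (column j A \<bullet> h) * signed_powr r (column j A \<bullet> w))) (at w)" for j
    by (rule DERIV_compose_FDERIV) (rule bounded_linear_imp_has_derivative[OF bounded_linear_inner_right])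
  then have "(dual_potential r A y has_derivative
      (\<lambda>h. (\<Sum>j\<in>UNIV. (column j A \<bullet> h) * signed_powr r (column j A \<bullet> w)) - y \<bullet> h)) (at w)"
    unfolding dual_potential_def
    by (intro has_derivative_diff has_derivative_sum bounded_linear_imp_has_derivative
        bounded_linear_inner_right)
  then show ?thesis
    by (simp add: dual_map_def matrix_vector_mult_inner inner_diff_left mult.commute)
qed

lemma dual_potential_pos_at_infinity:
  fixes A :: "real^'n^'m"
  assumes r: "r > 0" and A: "full_row_rank A"
  obtains R where "\<And>w. norm w \<ge> R \<Longrightarrow> dual_potential r A y w > 0"
proof -
  obtain c where c: "c > 0" "\<And>w. \<exists>j. c * norm w \<le> \<bar>column j A \<bullet> w\<bar>"
    using full_row_rank_bounded_below[OF A] by blast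
  have "filterlim (\<lambda>t. (c * t) powr (r + 1) / (r + 1) - norm y * t) at_top at_top"
    using r c(1) by real_asymp
  then obtain R where R: "\<And>t. t \<ge> R \<Longrightarrow> (c * t) powr (r + 1) / (r + 1) - norm y * t > 0"
    by (metis (no_types, lifting) eventually_at_top_linorder eventually_gt_at_top filterlim_iff)
  show ?thesis
  proof (rule that)
    fix w :: "real^'m"
    assume "norm w \<ge> R"
    obtain j where j: "c * norm w \<le> \<bar>column j A \<bullet> w\<bar>"
      using c(2) by blast
    have "(c * norm w) powr (r + 1) / (r + 1) \<le> \<bar>column j A \<bullet> w\<bar> powr (r + 1) / (r + 1)"
      using j c(1) r by (intro divide_right_mono powr_mono2) auto
    also have "\<dots> \<le> (\<Sum>i\<in>UNIV. \<bar>column i A \<bullet> w\<bar> powr (r + 1) / (r + 1))"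
      using r by (intro member_le_sum) auto
    finally show "dual_potential r A y w > 0"
      using R[OF \<open>norm w \<ge> R\<close>] norm_cauchy_schwarz[of y w] unfolding dual_potential_def
      by linarith
  qed
qed

text \<open>The dual map is the gradient of the coercive potential, so its value at a global
  minimiser of \<open>dual_potential r A y\<close> is \<open>y\<close>.\<close>

lemma surj_dual_map:
  fixes A :: "real^'n^'m"
  assumes r: "r > 0" and A: "full_row_rank A"
  shows "surj (dual_map r A)"
proof -
  have "y \<in> range (dual_map r A)" for y
  proof -
    obtain R where R: "\<And>w. norm w \<ge> R \<Longrightarrow> dual_potential r A y w > 0"
      using dual_potential_pos_at_infinity[OF r A] by blast
    have "continuous_on UNIV (dual_potential r A y)"
      using r unfolding dual_potential_def
      by (intro continuous_intros continuous_on_powr') auto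
    then obtain w0 where w0: "w0 \<in> cball 0 \<bar>R\<bar>"
      "\<And>v. v \<in> cball 0 \<bar>R\<bar> \<Longrightarrow> dual_potential r A y w0 \<le> dual_potential r A y v"
      using continuous_attains_inf[of "cball 0 \<bar>R\<bar>" "dual_potential r A y"]
      by (metis compact_cball cball_eq_empty abs_ge_zero continuous_on_subset subset_UNIV not_less)
    have "dual_potential r A y w0 \<le> dual_potential r A y v" for v
    proof (cases "v \<in> cball 0 \<bar>R\<bar>")
      case False
      then have "dual_potential r A y v > 0"
        by (intro R) auto
      moreover have "dual_potential r A y w0 \<le> dual_potential r A y 0"
        by (intro w0(2)) simp
      ultimately show ?thesis
        by (simp add: dual_potential_def)
    qed (use w0 in blast)
    then have "(\<lambda>h. (dual_map r A w0 - y) \<bullet> h) = (\<lambda>h. 0)"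
      by (intro has_derivative_local_min[OF has_derivative_dual_potential[OF r]] always_eventually) auto
    then have "(dual_map r A w0 - y) \<bullet> (dual_map r A w0 - y) = 0"
      by metis
    then show ?thesis
      by (metis inner_eq_zero_iff rangeI right_minus_eq)
  qed
  then show ?thesis
    by blast
qed

section \<open>Null sets\<close>

lemma negligible_iff_AE_lborel: "negligible X \<longleftrightarrow> (AE x in lborel. x \<notin> X)"
proof -
  have "negligible X \<longleftrightarrow> (AE x in lebesgue. x \<notin> X)"
    by (simp add: negligible_iff_null_sets completion.AE_iff_null_sets)
  also have "\<dots> \<longleftrightarrow> (AE x in lborel. x \<notin> X)"
    by (rule AE_completion_iff)
  finally show ?thesis .
qed

lemma negligible_Times:
  fixes X :: "'a::euclidean_space set" and Y :: "'b::euclidean_space set"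
  assumes "negligible X \<or> negligible Y"
  shows "negligible (X \<times> Y)"
proof -
  have null_superset: "\<exists>N \<in> null_sets lborel. Z \<subseteq> N" if Z: "negligible Z" for Z :: "'c::euclidean_space set"
  proof -
    obtain N where "{z \<in> space lborel. \<not> z \<notin> Z} \<subseteq> N" "emeasure lborel N = 0" "N \<in> sets lborel"
      using Z unfolding negligible_iff_AE_lborel by (rule AE_E)
    then show ?thesis
      by (intro bexI[of _ N] null_setsI) auto
  qed
  have "\<exists>N \<in> null_sets (lborel \<Otimes>\<^sub>M lborel). X \<times> Y \<subseteq> N"
    using assms
  proof
    assume "negligible X"
    then obtain N where "N \<in> null_sets lborel" "X \<subseteq> N"
      using null_superset by blast
    then show ?thesis
      by (intro bexI[of _ "N \<times> UNIV"] lborel.times_in_null_sets1) auto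
  next
    assume "negligible Y"
    then obtain N where "N \<in> null_sets lborel" "Y \<subseteq> N"
      using null_superset by blast
    then show ?thesis
      by (intro bexI[of _ "UNIV \<times> N"] lborel.times_in_null_sets2) auto
  qed
  then obtain N where "N \<in> null_sets lborel" "X \<times> Y \<subseteq> N"
    unfolding lborel_prod by blast
  then show ?thesis
    unfolding negligible_iff_AE_lborel by (auto intro: AE_I')
qed

lemma AE_negligible_sections:
  fixes E :: "('a::euclidean_space \<times> 'b::euclidean_space) set"
  assumes "negligible E"
  shows "AE x in lborel. negligible {y. (x, y) \<in> E}"
proof -
  have "AE z in lborel \<Otimes>\<^sub>M lborel. z \<notin> E"
    using assms unfolding negligible_iff_AE_lborel lborel_prod .
  then have "AE x in lborel. AE y in lborel. (x, y) \<notin> E"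
    by (rule lborel_pair.AE_pair)
  then show ?thesis
    by (simp add: negligible_iff_AE_lborel)
qed

lemma negligible_Times_UNIV_imp_negligible:
  fixes X :: "'a::euclidean_space set"
  assumes "negligible (X \<times> (UNIV :: 'b::euclidean_space set))"
  shows "negligible X"
proof -
  have "AE x in lborel. x \<notin> X"
    using AE_negligible_sections[OF assms]
  proof (rule eventually_mono)
    fix x
    assume "negligible {y :: 'b. (x, y) \<in> X \<times> UNIV}"
    then show "x \<notin> X"
      by (cases "x \<in> X") auto
  qed
  then show ?thesis
    by (simp add: negligible_iff_AE_lborel)
qed

text \<open>Rank--nullity: the kernel of a surjection from \<open>'b \<times> 'c\<close> onto \<open>'b\<close> has the
  dimension of \<open>'c\<close>, so completing the surjection by a coordinate on the kernel gives a
  linear automorphism of \<open>'b \<times> 'c\<close> that maps the preimage of \<open>X\<close> onto \<open>X \<times> UNIV\<close>.\<close>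

lemma negligible_if_negligible_preimage_linear:
  fixes \<Psi> :: "'b::euclidean_space \<times> 'c::euclidean_space \<Rightarrow> 'b"
  assumes lin: "linear \<Psi>" and surj: "surj \<Psi>" and neg: "negligible (\<Psi> -` X)"
  shows "negligible X"
proof -
  define K where "K = \<Psi> -` {0}"
  define R where "R = range (adjoint \<Psi>)"
  have lin_adj: "linear (adjoint \<Psi>)"
    by (rule adjoint_linear[OF lin])
  have "inj (adjoint \<Psi>)"
  proof (rule linear_injective_0[OF lin_adj, THEN iffD2], intro allI impI)
    fix y
    assume "adjoint \<Psi> y = 0"
    moreover obtain x where "\<Psi> x = y"
      using surj by (metis surjD)
    ultimately show "y = 0"
      using adjoint_works[OF lin, of x y] by simp
  qed
  then have "dim R = DIM('b)"
    unfolding R_def using dim_image_eq[OF lin_adj, of UNIV] by (simp add: inj_on_def)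
  moreover have "subspace R"
    unfolding R_def by (rule linear_subspace_image[OF lin_adj subspace_UNIV])
  moreover have K: "K = orthogonal_comp R"
    unfolding K_def R_def using ker_orthogonal_comp_adjoint[OF lin] by simp
  ultimately have "dim K + DIM('b) = DIM('b) + DIM('c)"
    using dim_subspace_orthogonal_to_vectors[of R UNIV]
    by (simp add: orthogonal_comp_def orthogonal_def)
  then have "dim K = dim (UNIV :: 'c set)"
    by simp
  moreover have "subspace K"
    unfolding K by (rule subspace_orthogonal_comp)
  ultimately obtain f :: "'b \<times> 'c \<Rightarrow> 'c" and g
    where fg: "linear f" "linear g" "\<And>x. x \<in> K \<Longrightarrow> g (f x) = x"
    using isometries_subspaces[of K UNIV] by (metis subspace_UNIV)
  define L where "L a = (\<Psi> a, f a)" for a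
  have lin_L: "linear L"
    using lin fg(1) by (auto simp: L_def linear_iff)
  have "inj L"
  proof (rule linear_injective_0[OF lin_L, THEN iffD2], intro allI impI)
    fix a
    assume "L a = 0"
    then have "a \<in> K" "f a = 0"
      by (auto simp: L_def K_def zero_prod_def)
    then show "a = 0"
      using fg(3)[of a] linear_0[OF fg(2)] by simp
  qed
  then have "surj L"
    using linear_injective_imp_surjective[OF lin_L] by simp
  have "L ` (\<Psi> -` X) = X \<times> UNIV"
  proof
    show "X \<times> UNIV \<subseteq> L ` (\<Psi> -` X)"
    proof clarify
      fix x c
      assume "x \<in> X"
      obtain a where "L a = (x, c)"
        using \<open>surj L\<close> by (metis surjD)
      then show "(x, c) \<in> L ` (\<Psi> -` X)"
        using \<open>x \<in> X\<close> by (force simp: L_def)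
    qed
  qed (auto simp: L_def)
  moreover have "negligible (L ` (\<Psi> -` X))"
    by (rule negligible_differentiable_image_negligible[OF order_refl neg
          linear_imp_differentiable_on[OF lin_L]])
  ultimately show ?thesis
    using negligible_Times_UNIV_imp_negligible by metis
qed

lemma negligible_if_countable_lines:
  fixes E :: "'a::euclidean_space set"
  assumes E: "E \<in> sets borel" and lines: "\<And>x. countable {s. x + s *\<^sub>R v \<in> E}"
  shows "negligible E"
proof (rule negligible_if_negligible_preimage_linear)
  define \<Psi> where "\<Psi> z = fst z + snd z *\<^sub>R v" for z :: "'a \<times> real"
  show "linear \<Psi>"
    unfolding \<Psi>_def by (intro linearI) (auto simp: algebra_simps)
  show "surj \<Psi>"
    by (rule surjI[of _ "\<lambda>x. (x, 0)"]) (simp add: \<Psi>_def)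
  have "continuous_on UNIV \<Psi>"
    unfolding \<Psi>_def by (intro continuous_intros)
  then have meas: "\<Psi> -` E \<in> sets (lborel \<Otimes>\<^sub>M lborel)"
    unfolding lborel_prod using measurable_sets_borel[OF borel_measurable_continuous_onI E] by simp
  have "emeasure (lborel \<Otimes>\<^sub>M lborel) (\<Psi> -` E) =
      (\<integral>\<^sup>+x. emeasure lborel (Pair x -` \<Psi> -` E) \<partial>lborel)"
    by (rule lborel.emeasure_pair_measure_alt[OF meas])
  also have "\<dots> = 0"
  proof -
    have "Pair x -` \<Psi> -` E = {s. x + s *\<^sub>R v \<in> E}" for x
      by (auto simp: \<Psi>_def)
    then show ?thesis
      using countable_imp_null_set_lborel[OF lines] by (simp add: null_sets_def)
  qed
  finally have "\<Psi> -` E \<in> null_sets (lborel \<Otimes>\<^sub>M lborel)"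
    using meas by (intro null_setsI)
  then have "\<Psi> -` E \<in> null_sets lborel"
    unfolding lborel_prod .
  then show "negligible (\<Psi> -` E)"
    unfolding negligible_iff_AE_lborel by (rule AE_not_in)
qed

lemma negligible_if_lines_meet_once:
  fixes E :: "'a::euclidean_space set"
  assumes E: "E \<in> sets borel"
    and once: "\<And>x s t. x + s *\<^sub>R v \<in> E \<Longrightarrow> x + t *\<^sub>R v \<in> E \<Longrightarrow> s = t"
  shows "negligible E"
proof (rule negligible_if_countable_lines[OF E])
  fix x
  show "countable {s. x + s *\<^sub>R v \<in> E}"
  proof (cases "\<exists>s. x + s *\<^sub>R v \<in> E")
    case True
    then obtain s where "x + s *\<^sub>R v \<in> E"
      by blast
    then have "{s. x + s *\<^sub>R v \<in> E} \<subseteq> {s}"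
      using once by blast
    then show ?thesis
      by (rule countable_subset) simp
  qed simp
qed

lemma borel_fst_image_closed_Int_open:
  fixes S U :: "('a::euclidean_space \<times> 'b::euclidean_space) set"
  assumes "closed S" "open U"
  shows "fst ` (S \<inter> U) \<in> sets borel"
proof -
  obtain C :: "nat \<Rightarrow> ('a \<times> 'b) set" where C: "\<And>n. compact (C n)" "\<Union>(range C) = U"
    using open_Union_compact_subsets[OF assms(2)] by metis
  have "compact (fst ` (S \<inter> C n))" for n
    by (rule compact_continuous_image[OF continuous_on_fst[OF continuous_on_id]])
      (rule closed_Int_compact[OF assms(1) C(1)])
  then have "(\<Union>n. fst ` (S \<inter> C n)) \<in> sets borel"
    by (intro sets.countable_UN) (auto intro: borel_compact)
  moreover have "fst ` (S \<inter> U) = (\<Union>n. fst ` (S \<inter> C n))"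
    by (simp only: C(2)[symmetric] Int_UN_distrib image_UN)
  ultimately show ?thesis
    by simp
qed

lemma linear_projection_orthogonal_comp:
  fixes V :: "'a::euclidean_space set"
  assumes "subspace V"
  obtains M where "linear M" "\<And>z. M z \<in> orthogonal_comp V" "\<And>z. z \<in> orthogonal_comp V \<Longrightarrow> M z = z"
proof -
  obtain B where B: "B \<subseteq> V" "pairwise orthogonal B" "\<And>x. x \<in> B \<Longrightarrow> norm x = 1"
    "independent B" "span B = V"
    using orthonormal_basis_subspace[OF assms] by metis
  then have fin: "finite B"
    using independent_imp_finite by blast
  have inner_B: "\<forall>b\<in>B. \<forall>b'\<in>B. b \<bullet> b' = (if b = b' then 1 else 0)"
    using B(2,3) norm_eq_1 by (auto simp: orthogonal_def pairwise_def)
  define M where "M z = z - (\<Sum>b\<in>B. (z \<bullet> b) *\<^sub>R b)" for z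
  show ?thesis
  proof
    show "linear M"
      unfolding M_def
      by (intro linearI) (auto simp: inner_add_left algebra_simps sum.distrib scaleR_sum_right)
  next
    fix z
    show "M z \<in> orthogonal_comp V"
      unfolding orthogonal_comp_def orthogonal_def mem_Collect_eq
    proof
      fix y
      assume "y \<in> V"
      then obtain u where u: "y = (\<Sum>b\<in>B. u b *\<^sub>R b)"
        using B(5) span_finite[OF fin] by auto
      have "b \<bullet> M z = 0" if "b \<in> B" for b
        using that fin
        by (simp add: M_def inner_B algebra_simps inner_sum_right if_distrib[of "(*) v" for v]
            inner_commute cong: if_cong)
      then show "y \<bullet> M z = 0"
        by (simp add: u inner_sum_left)
    qed
  next
    fix z
    assume "z \<in> orthogonal_comp V"
    then have "z \<bullet> b = 0" if "b \<in> B" for b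
      using B(1) that by (auto simp: orthogonal_comp_def orthogonal_def inner_commute)
    then show "M z = z"
      by (simp add: M_def)
  qed
qed

text \<open>The cylinder over the exceptional set \<open>B \<subseteq> range L\<close> is the image of
  \<open>UNIV \<times> L\<^sup>-\<^sup>1(B)\<close> under the surjection \<open>(z, u) \<mapsto> M z + L u\<close>, which is also its full
  preimage because \<open>range L \<inter> orthogonal_comp (range L) = {0}\<close>.\<close>

lemma ae_subspace_range_linear:
  fixes L :: "'a::euclidean_space \<Rightarrow> 'b::euclidean_space"
  assumes lin: "linear L" and neg: "negligible {u. \<not> P (L u)}"
  shows "ae_subspace (range L) P"
proof -
  define V where "V = range L"
  have V: "subspace V"
    unfolding V_def by (rule linear_subspace_image[OF lin subspace_UNIV, simplified])
  obtain M where M: "linear M" "\<And>z. M z \<in> orthogonal_comp V"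
    "\<And>z. z \<in> orthogonal_comp V \<Longrightarrow> M z = z"
    using linear_projection_orthogonal_comp[OF V] by blast
  define C where "C = {b + w | b w. b \<in> {y \<in> V. \<not> P y} \<and> w \<in> orthogonal_comp V}"
  define \<Psi> where "\<Psi> zu = M (fst zu) + L (snd zu)" for zu :: "'b \<times> 'a"
  have "negligible C"
  proof (rule negligible_if_negligible_preimage_linear)
    show "linear \<Psi>"
      using lin M(1) unfolding \<Psi>_def by (intro linearI) (auto simp: linear_add linear_cmul)
    have "y \<in> range \<Psi>" for y
    proof -
      have "y \<in> V + orthogonal_comp V"
        using subspace_sum_orthogonal_comp[OF V] by simp
      then obtain v w where "v \<in> V" "w \<in> orthogonal_comp V" "y = v + w"
        by (rule set_plus_elim)
      moreover obtain u where "v = L u"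
        using \<open>v \<in> V\<close> unfolding V_def by blast
      ultimately have "\<Psi> (w, u) = y"
        using M(3) by (simp add: \<Psi>_def)
      then show ?thesis
        by (metis rangeI)
    qed
    then show "surj \<Psi>"
      by blast
    have "\<Psi> -` C = UNIV \<times> {u. \<not> P (L u)}"
    proof (intro set_eqI iffI)
      fix zu
      assume "zu \<in> \<Psi> -` C"
      then obtain b w where bw: "M (fst zu) + L (snd zu) = b + w" "b \<in> V" "\<not> P b"
        "w \<in> orthogonal_comp V"
        unfolding C_def \<Psi>_def by auto
      have "L (snd zu) - b = w - M (fst zu)"
        using bw(1) by (simp add: algebra_simps)
      moreover have "L (snd zu) - b \<in> V"
        using bw(2) V by (auto simp: V_def intro: subspace_diff)
      moreover have "w - M (fst zu) \<in> orthogonal_comp V"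
        using bw(4) M(2) by (simp add: subspace_diff subspace_orthogonal_comp)
      ultimately have "L (snd zu) - b \<in> V \<inter> orthogonal_comp V"
        by simp
      then have "L (snd zu) = b"
        using orthogonal_Int_0[OF V] by simp
      then show "zu \<in> UNIV \<times> {u. \<not> P (L u)}"
        using bw(3) by (simp add: mem_Times_iff)
    next
      fix zu :: "'b \<times> 'a"
      assume "zu \<in> UNIV \<times> {u. \<not> P (L u)}"
      then have "L (snd zu) \<in> {y \<in> V. \<not> P y}"
        by (simp add: V_def mem_Times_iff)
      moreover have "\<Psi> zu = L (snd zu) + M (fst zu)"
        by (simp add: \<Psi>_def)
      ultimately show "zu \<in> \<Psi> -` C"
        using M(2) unfolding C_def by blast
    qed
    then show "negligible (\<Psi> -` C)"
      using negligible_Times[of "UNIV :: 'b set"] neg by simp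
  qed
  then show ?thesis
    unfolding ae_subspace_def subspace_null_def C_def V_def
    by (simp add: negligible_iff_null_sets)
qed

section \<open>Generic matrices\<close>

lemma independent_eigenvectors:
  fixes f :: "'a::real_vector \<Rightarrow> 'a"
  assumes f: "linear f" and U: "finite U"
    and eigen: "\<And>u. u \<in> U \<Longrightarrow> u \<noteq> 0 \<and> f u = \<mu> u *\<^sub>R u" and distinct: "inj_on \<mu> U"
  shows "independent U"
  using U eigen distinct
proof (induction U rule: finite_induct)
  case (insert u U)
  then have indep: "independent U"
    by simp
  have "u \<notin> span U"
  proof
    assume "u \<in> span U"
    then obtain c where c: "u = (\<Sum>x\<in>U. c x *\<^sub>R x)"
      using span_finite[OF insert.hyps(1)] by auto
    \<comment> \<open>Applying \<open>f - \<mu> u\<close> to this representation kills \<open>u\<close> and rescales each \<open>x\<close>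
       by \<open>\<mu> x - \<mu> u \<noteq> 0\<close>.\<close>
    have "(\<Sum>x\<in>U. (c x * (\<mu> x - \<mu> u)) *\<^sub>R x) = f u - \<mu> u *\<^sub>R u"
      using insert.prems(1)
      by (simp add: c linear_sum[OF f] linear_scale[OF f] scaleR_sum_right algebra_simps
          sum_subtractf)
    also have "\<dots> = 0"
      using insert.prems(1) by simp
    finally have sum_0: "(\<Sum>x\<in>U. (c x * (\<mu> x - \<mu> u)) *\<^sub>R x) = 0" .
    have "c x * (\<mu> x - \<mu> u) = 0" if "x \<in> U" for x
      using independentD[OF indep insert.hyps(1) order_refl sum_0 that] .
    moreover have "\<mu> x \<noteq> \<mu> u" if "x \<in> U" for x
      using insert.prems(2) insert.hyps(2) that by (auto simp: inj_on_def)
    ultimately have "u = 0"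
      by (simp add: c)
    then show False
      using insert.prems(1) by simp
  qed
  then show ?case
    using indep by (simp add: independent_insertI)
qed (use independent_empty in blast)

lemma finite_eigenvalues:
  fixes f :: "'a::euclidean_space \<Rightarrow> 'a"
  assumes f: "linear f"
  shows "finite {s. \<exists>x. x \<noteq> 0 \<and> f x = s *\<^sub>R x}"
proof (rule ccontr)
  assume "infinite {s. \<exists>x. x \<noteq> 0 \<and> f x = s *\<^sub>R x}"
  then obtain S where S: "S \<subseteq> {s. \<exists>x. x \<noteq> 0 \<and> f x = s *\<^sub>R x}" "finite S" "card S = Suc DIM('a)"
    using infinite_arbitrarily_large by blast
  then have "\<forall>s\<in>S. \<exists>x. x \<noteq> 0 \<and> f x = s *\<^sub>R x"
    by blast
  then obtain v where v: "\<forall>s\<in>S. v s \<noteq> 0 \<and> f (v s) = s *\<^sub>R v s"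
    by metis
  have "inj_on v S"
  proof (rule inj_onI)
    fix s t
    assume "s \<in> S" "t \<in> S" "v s = v t"
    then have "s *\<^sub>R v s = t *\<^sub>R v s" "v s \<noteq> 0"
      using v by metis+
    then show "s = t"
      by simp
  qed
  then have "independent (v ` S)"
    using S(2) v by (intro independent_eigenvectors[OF f, where \<mu> = "inv_into S v"])
      (auto intro: inj_on_inv_into)
  then have "card (v ` S) \<le> DIM('a)"
    using independent_bound by blast
  then show False
    using S(3) card_image[OF \<open>inj_on v S\<close>] by simp
qed

definition column_submatrix :: "('m \<Rightarrow> 'n) \<Rightarrow> real^'n^'m \<Rightarrow> real^'m^'m" where
  "column_submatrix \<tau> A = (\<chi> a l. A $ a $ \<tau> l)"

lemma full_row_rank_if_det_column_submatrix:
  assumes "det (column_submatrix \<tau> A) \<noteq> 0"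
  shows "full_row_rank A"
  unfolding full_row_rank_def
proof (intro allI impI)
  fix w
  assume "\<forall>j. column j A \<bullet> w = 0"
  then have "transpose (column_submatrix \<tau> A) *v w = 0"
    by (simp add: vec_eq_iff column_submatrix_def vector_matrix_mult_def column_def inner_vec_def
        mult.commute)
  moreover have "inj ((*v) (transpose (column_submatrix \<tau> A)))"
    using assms by (intro inj_matrix_vector_mult) (simp add: invertible_det_nz)
  ultimately show "w = 0"
    by (metis injD matrix_vector_mult_0_right)
qed

lemma column_ne_0_if_det_column_submatrix:
  assumes "det (column_submatrix \<tau> A) \<noteq> 0"
  shows "column (\<tau> l) A \<noteq> 0"
proof
  assume "column (\<tau> l) A = 0"
  then have "column l (column_submatrix \<tau> A) = 0"
    by (simp add: vec_eq_iff column_def column_submatrix_def)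
  then show False
    using assms det_zero_column(1) by blast
qed

text \<open>Along the direction that adds \<open>s\<close> to every selected entry, the submatrix moves by
  \<open>s *\<^sub>R mat 1\<close>, so a line meets the singular set only at the finitely many negated eigenvalues.\<close>

lemma negligible_det_column_submatrix_eq_0:
  assumes "inj (\<tau> :: 'm \<Rightarrow> 'n)"
  shows "negligible {A :: real^'n^'m. det (column_submatrix \<tau> A) = 0}"
proof (rule negligible_if_countable_lines)
  have "continuous_on UNIV (\<lambda>A :: real^'n^'m. det (column_submatrix \<tau> A))"
    unfolding det_def column_submatrix_def by (intro continuous_intros)
  then show "{A :: real^'n^'m. det (column_submatrix \<tau> A) = 0} \<in> sets borel"
    by (intro borel_closed closed_Collect_eq continuous_intros) auto
next
  fix A :: "real^'n^'m"
  define V :: "real^'n^'m" where "V = (\<chi> a b. if b = \<tau> a then 1 else 0)"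
  have shift: "column_submatrix \<tau> (A + s *\<^sub>R V) = column_submatrix \<tau> A + s *\<^sub>R mat 1" for s
    using assms by (simp add: column_submatrix_def V_def vec_eq_iff mat_def inj_eq)
  have "{s. A + s *\<^sub>R V \<in> {A. det (column_submatrix \<tau> A) = 0}} \<subseteq>
      uminus ` {s. \<exists>x. x \<noteq> 0 \<and> column_submatrix \<tau> A *v x = s *\<^sub>R x}"
  proof
    fix s
    assume "s \<in> {s. A + s *\<^sub>R V \<in> {A. det (column_submatrix \<tau> A) = 0}}"
    then have "det (column_submatrix \<tau> A + s *\<^sub>R mat 1) = 0"
      by (simp add: shift)
    then have "\<not> inj ((*v) (column_submatrix \<tau> A + s *\<^sub>R mat 1))"
      using det_nz_iff_inj[OF matrix_vector_mul_linear, of "column_submatrix \<tau> A + s *\<^sub>R mat 1"]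
      by simp
    then obtain x y where "x \<noteq> y"
      "(column_submatrix \<tau> A + s *\<^sub>R mat 1) *v x = (column_submatrix \<tau> A + s *\<^sub>R mat 1) *v y"
      by (auto simp: inj_def)
    then have "x - y \<noteq> 0" "column_submatrix \<tau> A *v (x - y) = (- s) *\<^sub>R (x - y)"
      by (auto simp: matrix_vector_mult_add_rdistrib matrix_vector_mult_diff_distrib algebra_simps
          scaleR_matrix_vector_assoc[symmetric])
    then show "s \<in> uminus ` {s. \<exists>x. x \<noteq> 0 \<and> column_submatrix \<tau> A *v x = s *\<^sub>R x}"
      by (intro image_eqI[of _ _ "- s"] CollectI exI[of _ "x - y"]) auto
  qed
  moreover have "finite (uminus ` {s. \<exists>x. x \<noteq> 0 \<and> column_submatrix \<tau> A *v x = s *\<^sub>R x})"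
    using finite_eigenvalues[OF matrix_vector_mul_linear] by blast
  ultimately show "countable {s. A + s *\<^sub>R V \<in> {A. det (column_submatrix \<tau> A) = 0}}"
    by (meson countable_finite finite_subset)
qed

section \<open>The exceptional pairs\<close>

definition zero_outside :: "'n set \<Rightarrow> real^'n \<Rightarrow> real^'n" where
  "zero_outside I u = (\<chi> i. if i \<in> I then u $ i else 0)"

lemma linear_zero_outside: "linear (zero_outside I)"
  by (intro linearI) (simp_all add: zero_outside_def vec_eq_iff)

lemma col_range_eq_range_zero_outside: "col_range A I = range (\<lambda>u. A *v zero_outside I u)"
proof
  have lin: "linear (\<lambda>u. A *v zero_outside I u)"
    using linear_compose[OF linear_zero_outside matrix_vector_mul_linear] by (simp add: o_def)
  show "col_range A I \<subseteq> range (\<lambda>u. A *v zero_outside I u)"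
    unfolding col_range_def
  proof (rule span_minimal)
    show "{column j A |j. j \<in> I} \<subseteq> range (\<lambda>u. A *v zero_outside I u)"
    proof clarify
      fix j
      assume "j \<in> I"
      then have "zero_outside I (axis j 1) = axis j 1"
        by (simp add: zero_outside_def axis_def vec_eq_iff)
      then have "A *v zero_outside I (axis j 1) = column j A"
        by (simp add: matrix_vector_mult_basis)
      then show "column j A \<in> range (\<lambda>u. A *v zero_outside I u)"
        by (metis rangeI)
    qed
  qed (use linear_subspace_image[OF lin subspace_UNIV] in simp)
  show "range (\<lambda>u. A *v zero_outside I u) \<subseteq> col_range A I"
  proof clarify
    fix u
    have "A *v zero_outside I u = (\<Sum>j\<in>UNIV. (zero_outside I u $ j) *\<^sub>R column j A)"
      by (simp add: matrix_mult_sum scalar_mult_eq_scaleR)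
    also have "\<dots> \<in> col_range A I"
      unfolding col_range_def
      by (intro span_sum) (auto simp: zero_outside_def span_zero intro: span_mul span_base)
    finally show "A *v zero_outside I u \<in> col_range A I" .
  qed
qed

lemma continuous_on_zero_outside [continuous_intros]:
  assumes "continuous_on S f"
  shows "continuous_on S (\<lambda>z. zero_outside I (f z))"
proof -
  have "zero_outside I (f z) = (\<chi> i. of_bool (i \<in> I) * f z $ i)" for z
    by (simp add: zero_outside_def vec_eq_iff)
  then show ?thesis
    using assms by (simp only:) (intro continuous_intros)
qed

lemma continuous_on_matrix_vector_mult [continuous_intros]:
  fixes f :: "'a::topological_space \<Rightarrow> real^'n^'m"
  shows "continuous_on S f \<Longrightarrow> continuous_on S g \<Longrightarrow> continuous_on S (\<lambda>z. f z *v g z)"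
  unfolding matrix_vector_mult_def by (intro continuous_intros)

lemma continuous_on_inner_column [continuous_intros]:
  fixes f :: "'a::topological_space \<Rightarrow> real^'n^'m"
  shows "continuous_on S f \<Longrightarrow> continuous_on S g \<Longrightarrow> continuous_on S (\<lambda>z. column j (f z) \<bullet> g z)"
  unfolding column_def inner_vec_def by (intro continuous_intros)

lemma continuous_on_dual_map [continuous_intros]:
  "r > 0 \<Longrightarrow> continuous_on S f \<Longrightarrow> continuous_on S g \<Longrightarrow>
    continuous_on S (\<lambda>z. dual_map r (f z) (g z))"
  unfolding dual_map_def by (intro continuous_intros) auto

text \<open>If \<open>j \<in> I\<close>, moving \<open>u\<close> along \<open>e\<^sub>j\<close> moves \<open>y = A (zero_outside I u)\<close> along \<open>a\<^sub>j\<close>; two such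
  \<open>y\<close> with dual vectors orthogonal to \<open>a\<^sub>j\<close> must coincide by strict monotonicity of the
  dual map.\<close>

lemma negligible_orthogonal_column_in_support:
  fixes \<tau> :: "'m::finite \<Rightarrow> 'n::finite"
  assumes r: "r > 0" and j: "j \<in> I" "j \<in> range \<tau>"
  shows "negligible {(A :: real^'n^'m, u). det (column_submatrix \<tau> A) \<noteq> 0 \<and>
           (\<exists>w. dual_map r A w = A *v zero_outside I u \<and> column j A \<bullet> w = 0)}" (is "negligible ?E")
proof (rule negligible_if_lines_meet_once)
  define S where "S = {((A :: real^'n^'m, u :: real^'n), w :: real^'m).
    dual_map r A w = A *v zero_outside I u \<and> column j A \<bullet> w = 0}"
  define U where "U = {((A :: real^'n^'m, u :: real^'n), w :: real^'m).
    det (column_submatrix \<tau> A) \<noteq> 0}"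
  have "closed S"
    unfolding S_def case_prod_beta
    using r by (intro closed_Collect_conj closed_Collect_eq continuous_intros) auto
  moreover have "open U"
    unfolding U_def case_prod_beta
    by (intro open_Collect_neq continuous_intros) (auto simp: det_def column_submatrix_def intro!: continuous_intros)
  moreover have "?E = fst ` (S \<inter> U)"
    by (force simp: S_def U_def)
  ultimately show "?E \<in> sets borel"
    by (simp add: borel_fst_image_closed_Int_open)
next
  fix x :: "(real^'n^'m) \<times> (real^'n)" and s t
  obtain A u where x: "x = (A, u)"
    by fastforce
  have shift: "A *v zero_outside I (u + c *\<^sub>R axis j 1) = A *v zero_outside I u + c *\<^sub>R column j A" for c
  proof -
    have "zero_outside I (u + c *\<^sub>R axis j 1) = zero_outside I u + c *\<^sub>R axis j 1"
      using j(1) by (simp add: zero_outside_def axis_def vec_eq_iff)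
    then show ?thesis
      by (simp add: matrix_vector_right_distrib matrix_vector_mult_scaleR matrix_vector_mult_basis)
  qed
  assume "x + s *\<^sub>R (0, axis j 1) \<in> ?E" "x + t *\<^sub>R (0, axis j 1) \<in> ?E"
  then obtain v w where
    A: "det (column_submatrix \<tau> A) \<noteq> 0" and
    v: "dual_map r A v = A *v zero_outside I u + s *\<^sub>R column j A" "column j A \<bullet> v = 0" and
    w: "dual_map r A w = A *v zero_outside I u + t *\<^sub>R column j A" "column j A \<bullet> w = 0"
    by (auto simp: x shift)
  have "(dual_map r A v - dual_map r A w) \<bullet> (v - w) = (s - t) * (column j A \<bullet> (v - w))"
    using v(1) w(1) by (simp add: algebra_simps)
  also have "\<dots> = 0"
    using v(2) w(2) by (simp add: inner_diff_right)
  finally have "v = w"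
    by (rule dual_map_monotone_eq_0_imp_eq[OF r full_row_rank_if_det_column_submatrix[OF A]])
  then have "s *\<^sub>R column j A = t *\<^sub>R column j A"
    using v(1) w(1) by (metis add_left_cancel)
  moreover have "column j A \<noteq> 0"
    using column_ne_0_if_det_column_submatrix[OF A] j(2) by blast
  ultimately show "s = t"
    by simp
qed

definition zero_column :: "'n \<Rightarrow> real^'n^'m \<Rightarrow> real^'n^'m" where
  "zero_column j A = (\<chi> a b. if b = j then 0 else A $ a $ b)"

lemma dual_map_zero_column:
  assumes "column j A \<bullet> w = 0"
  shows "dual_map r (zero_column j A) w = dual_map r A w"
proof -
  have "column b (zero_column j A) = (if b = j then 0 else column b A)" for b
    by (simp add: zero_column_def column_def vec_eq_iff)
  then show ?thesis
    using assms by (auto simp: dual_map_def matrix_mult_sum intro!: sum.cong)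
qed

lemma column_submatrix_zero_column:
  "j \<notin> range \<tau> \<Longrightarrow> column_submatrix \<tau> (zero_column j A) = column_submatrix \<tau> A"
  by (auto simp: column_submatrix_def zero_column_def vec_eq_iff)

lemma zero_column_add_axis: "zero_column j (A + s *\<^sub>R axis k (axis j 1)) = zero_column j A"
  by (simp add: zero_column_def axis_def vec_eq_iff)

lemma column_submatrix_add_axis:
  "j \<notin> range \<tau> \<Longrightarrow> column_submatrix \<tau> (A + s *\<^sub>R axis k (axis j 1)) = column_submatrix \<tau> A"
  by (auto simp: column_submatrix_def axis_def vec_eq_iff)

lemma add_axis_mult_zero_outside:
  fixes A :: "real^'n^'m"
  assumes "j \<notin> I"
  shows "(A + s *\<^sub>R axis k (axis j 1)) *v zero_outside I u = A *v zero_outside I u"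
proof -
  have "(axis k (axis j 1) :: real^'n^'m) *v x = axis k (x $ j)" for x
    by (simp add: vec_eq_iff matrix_vector_mul_component axis_def[of k] inner_axis')
  then show ?thesis
    using assms
    by (simp add: matrix_vector_mult_add_rdistrib zero_outside_def flip: scaleR_matrix_vector_assoc)
qed

lemma column_add_axis_inner:
  "column j (A + s *\<^sub>R axis k (axis j 1)) \<bullet> w = column j A \<bullet> w + s * w $ k"
proof -
  have "column j (A + s *\<^sub>R axis k (axis j 1)) = column j A + s *\<^sub>R axis k 1"
    by (simp add: column_def axis_def vec_eq_iff)
  then show ?thesis
    by (simp add: inner_add_left inner_axis')
qed

text \<open>If \<open>j \<notin> I\<close>, the entry \<open>(k, j)\<close> of \<open>A\<close> affects neither \<open>y = A (zero_outside I u)\<close> nor,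
  once \<open>a\<^sub>j \<bullet> w = 0\<close>, the dual equation, which then only sees \<open>zero_column j A\<close>; but it shifts
  \<open>a\<^sub>j \<bullet> w\<close> by a multiple of \<open>w\<^sub>k \<noteq> 0\<close>.\<close>

lemma negligible_orthogonal_column_off_support:
  fixes \<tau> :: "'m::finite \<Rightarrow> 'n::finite"
  assumes r: "r > 0" and j: "j \<notin> I" "j \<notin> range \<tau>"
  shows "negligible {(A :: real^'n^'m, u). det (column_submatrix \<tau> A) \<noteq> 0 \<and>
           (\<exists>w. dual_map r A w = A *v zero_outside I u \<and> column j A \<bullet> w = 0 \<and> w $ k \<noteq> 0)}"
    (is "negligible ?E")
proof (rule negligible_if_lines_meet_once)
  define S where "S = {((A :: real^'n^'m, u :: real^'n), w :: real^'m).
    dual_map r A w = A *v zero_outside I u \<and> column j A \<bullet> w = 0}"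
  define U where "U = {((A :: real^'n^'m, u :: real^'n), w :: real^'m).
    det (column_submatrix \<tau> A) \<noteq> 0 \<and> w $ k \<noteq> 0}"
  have "closed S"
    unfolding S_def case_prod_beta
    using r by (intro closed_Collect_conj closed_Collect_eq continuous_intros) auto
  moreover have "open U"
    unfolding U_def case_prod_beta
    by (intro open_Collect_conj open_Collect_neq continuous_intros)
      (auto simp: det_def column_submatrix_def intro!: continuous_intros)
  moreover have "?E = fst ` (S \<inter> U)"
    by (force simp: S_def U_def)
  ultimately show "?E \<in> sets borel"
    by (simp add: borel_fst_image_closed_Int_open)
next
  fix x :: "(real^'n^'m) \<times> (real^'n)" and s t
  obtain A u where x: "x = (A, u)"
    by fastforce
  have on_line: "\<exists>w. dual_map r (zero_column j A) w = A *v zero_outside I u \<and>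
      column j A \<bullet> w + c * w $ k = 0 \<and> w $ k \<noteq> 0 \<and> det (column_submatrix \<tau> A) \<noteq> 0"
    if "x + c *\<^sub>R (axis k (axis j 1), 0) \<in> ?E" for c
  proof -
    have "(A + c *\<^sub>R axis k (axis j 1), u) \<in> ?E"
      using that by (simp add: x)
    then obtain w where w: "det (column_submatrix \<tau> (A + c *\<^sub>R axis k (axis j 1))) \<noteq> 0"
      "dual_map r (A + c *\<^sub>R axis k (axis j 1)) w = (A + c *\<^sub>R axis k (axis j 1)) *v zero_outside I u"
      "column j (A + c *\<^sub>R axis k (axis j 1)) \<bullet> w = 0" "w $ k \<noteq> 0"
      by blast
    have "dual_map r (zero_column j A) w = A *v zero_outside I u"
      using dual_map_zero_column[OF w(3), of r] w(2)
      by (simp add: zero_column_add_axis add_axis_mult_zero_outside j(1))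
    moreover have "column j A \<bullet> w + c * w $ k = 0"
      using w(3) by (simp add: column_add_axis_inner)
    moreover have "det (column_submatrix \<tau> A) \<noteq> 0"
      using w(1) by (simp add: column_submatrix_add_axis j(2))
    ultimately show ?thesis
      using w(4) by blast
  qed
  assume s: "x + s *\<^sub>R (axis k (axis j 1), 0) \<in> ?E" and t: "x + t *\<^sub>R (axis k (axis j 1), 0) \<in> ?E"
  obtain v where
    v: "dual_map r (zero_column j A) v = A *v zero_outside I u" "column j A \<bullet> v + s * v $ k = 0"
      "v $ k \<noteq> 0" "det (column_submatrix \<tau> A) \<noteq> 0"
    using on_line[OF s] by blast
  obtain w where
    w: "dual_map r (zero_column j A) w = A *v zero_outside I u" "column j A \<bullet> w + t * w $ k = 0"
    using on_line[OF t] by blast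
  have "full_row_rank (zero_column j A)"
    using v(4) by (intro full_row_rank_if_det_column_submatrix[of \<tau>])
      (simp add: column_submatrix_zero_column j(2))
  then have "v = w"
    using inj_dual_map[OF r] v(1) w(1) by (metis injD)
  then have "column j A \<bullet> v + t * v $ k = 0"
    using w(2) by simp
  then have "s * v $ k = t * v $ k"
    using v(2) by linarith
  then show "s = t"
    using v(3) by simp
qed

lemma exists_inj_hitting:
  assumes "CARD('m) \<le> CARD('n)"
  obtains \<tau> :: "'m::finite \<Rightarrow> 'n::finite" where "inj \<tau>" "j \<in> range \<tau>"
proof -
  obtain f :: "'m \<Rightarrow> 'n" where f: "inj f"
    using card_le_inj[of "UNIV :: 'm set" "UNIV :: 'n set"] assms by auto
  show ?thesis
  proof (cases "j \<in> range f")
    case False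
    then have "inj (f(undefined := j))"
      using f by (intro inj_on_fun_updI) auto
    then show ?thesis
      by (rule that) simp
  qed (use f that in blast)
qed

lemma exists_inj_avoiding:
  assumes "CARD('m) < CARD('n)"
  obtains \<tau> :: "'m::finite \<Rightarrow> 'n::finite" where "inj \<tau>" "j \<notin> range \<tau>"
proof -
  have "card (UNIV :: 'm set) \<le> card (UNIV - {j} :: 'n set)"
    using assms by simp
  then obtain f :: "'m \<Rightarrow> 'n" where "f ` UNIV \<subseteq> UNIV - {j}" "inj f"
    using card_le_inj[of "UNIV :: 'm set" "UNIV - {j} :: 'n set"] by auto
  then show ?thesis
    using that by blast
qed

lemma orthogonal_column_if_not_unique_full_support_solution:
  assumes p: "p > 1" and A: "full_row_rank A" and y: "\<not> unique_full_support_solution p A y"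
  obtains w j where "dual_map (1 / (p - 1)) A w = y" "column j A \<bullet> w = 0"
proof -
  obtain w where w: "dual_map (1 / (p - 1)) A w = y"
    using surj_dual_map[of "1 / (p - 1)" A] p A by (metis divide_pos_pos surjD zero_less_one diff_gt_0_iff_gt)
  then have "\<not> (\<forall>j. column j A \<bullet> w \<noteq> 0)"
    using unique_full_support_solution_dual_map[OF p] y by blast
  then show ?thesis
    using that w by blast
qed

text \<open>For \<open>j \<notin> I\<close> the column selection \<open>\<tau> j\<close> must avoid column \<open>j\<close>, which needs
  \<open>N > m\<close>: this is where \<open>N \<ge> 2 m - 1\<close> enters, as \<open>I \<noteq> {}\<close> and \<open>j \<notin> I\<close> force \<open>N \<ge> 2\<close>.\<close>

lemma negligible_not_unique_full_support_solution:
  fixes I :: "'n::finite set"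
  assumes p: "p > 1" and N: "CARD('n) \<ge> 2 * CARD('m::finite) - 1" and I: "I \<noteq> {}"
  shows "negligible {(A :: real^'n^'m, u). \<not> unique_full_support_solution p A (A *v zero_outside I u)}"
proof -
  define r where "r = 1 / (p - 1)"
  have r: "r > 0"
    using p by (simp add: r_def)
  obtain i where i: "i \<in> I"
    using I by blast
  have "\<exists>\<tau> :: 'm \<Rightarrow> 'n. inj \<tau> \<and> (j \<in> range \<tau> \<longleftrightarrow> j \<in> I)" for j
  proof (cases "j \<in> I")
    case True
    have "CARD('m) \<le> CARD('n)"
      using N by linarith
    then show ?thesis
      using exists_inj_hitting True by metis
  next
    case False
    then have "CARD('n) \<ge> 2"
      using i card_mono[of "UNIV :: 'n set" "{i, j}"] by (cases "i = j") auto
    then have "CARD('m) < CARD('n)"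
      using N finite_UNIV_card_ge_0[where 'a = 'm] by linarith
    then show ?thesis
      using exists_inj_avoiding False by metis
  qed
  then obtain \<tau> :: "'n \<Rightarrow> 'm \<Rightarrow> 'n"
    where \<tau>: "\<And>j. inj (\<tau> j)" "\<And>j. j \<in> range (\<tau> j) \<longleftrightarrow> j \<in> I"
    by metis
  define singular where "singular = (\<Union>j. {A :: real^'n^'m. det (column_submatrix (\<tau> j) A) = 0})"
  define inside where "inside j = {(A :: real^'n^'m, u). det (column_submatrix (\<tau> j) A) \<noteq> 0 \<and>
    (\<exists>w. dual_map r A w = A *v zero_outside I u \<and> column j A \<bullet> w = 0)}" for j
  define outside where "outside j k = {(A :: real^'n^'m, u). det (column_submatrix (\<tau> j) A) \<noteq> 0 \<and>
    (\<exists>w. dual_map r A w = A *v zero_outside I u \<and> column j A \<bullet> w = 0 \<and> w $ k \<noteq> 0)}" for j k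
  have cover: "(A, u) \<in> singular \<times> UNIV \<union> (\<Union>j\<in>I. inside j) \<union> (\<Union>j\<in>-I. \<Union>k. outside j k)"
    if bad: "\<not> unique_full_support_solution p A (A *v zero_outside I u)" for A u
  proof (cases "A \<in> singular")
    case False
    then have det: "det (column_submatrix (\<tau> j) A) \<noteq> 0" for j
      by (auto simp: singular_def)
    obtain w j where w: "dual_map r A w = A *v zero_outside I u" "column j A \<bullet> w = 0"
      using orthogonal_column_if_not_unique_full_support_solution[OF p
          full_row_rank_if_det_column_submatrix[OF det] bad] unfolding r_def by blast
    show ?thesis
    proof (cases "j \<notin> I \<and> w \<noteq> 0")
      case True
      then obtain k where "w $ k \<noteq> 0"
        by (auto simp: vec_eq_iff)
      then have "(A, u) \<in> outside j k"
        using det w by (auto simp: outside_def)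
      then show ?thesis
        using True by blast
    next
      case False
      \<comment> \<open>If \<open>w = 0\<close>, every column is orthogonal to \<open>w\<close>, in particular \<open>a\<^sub>i\<close>, \<open>i \<in> I\<close>.\<close>
      then obtain j' where "j' \<in> I" "column j' A \<bullet> w = 0"
        using w(2) i by auto
      then have "(A, u) \<in> inside j'"
        using det w(1) by (auto simp: inside_def)
      then show ?thesis
        using \<open>j' \<in> I\<close> by blast
    qed
  qed simp
  moreover have "negligible singular"
    unfolding singular_def using negligible_det_column_submatrix_eq_0[OF \<tau>(1)]
    by (intro negligible_Union) auto
  moreover have "negligible (inside j)" if "j \<in> I" for j
    unfolding inside_def using negligible_orthogonal_column_in_support[OF r that] \<tau>(2) that by blast
  moreover have "negligible (outside j k)" if "j \<notin> I" for j k
    unfolding outside_def using negligible_orthogonal_column_off_support[OF r that] \<tau>(2) that by blast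
  ultimately have
    "negligible (singular \<times> UNIV \<union> (\<Union>j\<in>I. inside j) \<union> (\<Union>j\<in>-I. \<Union>k. outside j k))"
    by (intro negligible_Un negligible_Union negligible_Times) auto
  moreover have "{(A :: real^'n^'m, u). \<not> unique_full_support_solution p A (A *v zero_outside I u)} \<subseteq>
      singular \<times> UNIV \<union> (\<Union>j\<in>I. inside j) \<union> (\<Union>j\<in>-I. \<Union>k. outside j k)"
  proof
    fix z
    assume "z \<in> {(A :: real^'n^'m, u). \<not> unique_full_support_solution p A (A *v zero_outside I u)}"
    then obtain A u where "z = (A, u)" "\<not> unique_full_support_solution p A (A *v zero_outside I u)"
      by blast
    then show "z \<in> singular \<times> UNIV \<union> (\<Union>j\<in>I. inside j) \<union> (\<Union>j\<in>-I. \<Union>k. outside j k)"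
      using cover by blast
  qed
  ultimately show ?thesis
    by (rule negligible_subset)
qed

theorem theorem5p1:
  fixes p :: real and I :: "'n::finite set"
  assumes "p > 1"
    and "CARD('n) \<ge> 2 * CARD('m::finite) - 1"
    and "I \<noteq> {}"
  shows "\<exists>S :: (real ^ 'n ^ 'm) set.
           (UNIV - S) \<in> null_sets lebesgue \<and>
           (\<forall>A\<in>S. ae_subspace (col_range A I)
              (\<lambda>y. \<exists>x. lp_optimal p A y x \<and> (\<forall>x'. lp_optimal p A y x' \<longrightarrow> x' = x)
                        \<and> card (supp x) = CARD('n)))"
proof -
  define S where
    "S = {A :: real^'n^'m. negligible {u. \<not> unique_full_support_solution p A (A *v zero_outside I u)}}"
  have "AE A in lborel. A \<in> S"
    using AE_negligible_sections[OF negligible_not_unique_full_support_solution[OF assms]]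
    by (simp add: S_def)
  then have "(UNIV - S) \<in> null_sets lebesgue"
    by (simp add: negligible_iff_AE_lborel flip: negligible_iff_null_sets)
  moreover have "ae_subspace (col_range A I) (unique_full_support_solution p A)" if "A \<in> S" for A
    unfolding col_range_eq_range_zero_outside
    using that linear_compose[OF linear_zero_outside matrix_vector_mul_linear]
    by (intro ae_subspace_range_linear) (auto simp: S_def o_def)
  ultimately show ?thesis
    unfolding unique_full_support_solution_def by blast
qed

end
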